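(* Let $n$ be a nonnegative integer and let $q$, $a$, $z$ be indeterminates (equivalently, generic complex numbers such that no denominator below vanishes). Then \[ \frac{(q^{z-n+\frac{3}{2}};q)_n\,(aq^{z-\frac{1}{2}};q)_n} {(q^{z-2n+2};q)_n\,(aq^{z+n-1};q)_n} =\sum_{k=0}^n \frac{(q^{-n};q)_k\,(q^{-n+\frac{1}{2}};q)_k\,(q^{\frac{5}{2}-2n}/a;q)_k} {(q;q)_k\,(q^{z-2n+2};q)_k\,(q^{2-2n-z}/a;q)_k}\,q^k . \]
   Context: For a variable $u$ and a nonnegative integer $n$, the $q$-shifted factorial is $(u;q)_0=1$ and $(u;q)_n=(1-u)(1-uq)\cdots(1-uq^{n-1})$. Powers such as $q^{z}$ and $q^{1/2}$ are understood formally (i.e., $q^{z}$ and $q^{1/2}$ are treated as variables). *)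

theory Defs
  imports Complex_Main
begin

definition qpoch :: "complex \<Rightarrow> complex \<Rightarrow> nat \<Rightarrow> complex" where
  "qpoch u q n = (\<Prod>i<n. (1 - u * q ^ i))"

end

theory Submission
  imports Defs
begin

(*
  With r = q^(1/2) and w = q^z this is the q-Pfaff-Saalschuetz summation

    sum_(k<=n) (q^-n, A, B; q)_k / (q, C, q^(1-n) A B / C; q)_k * q^k
      = (C/A, C/B; q)_n / (C, C/(AB); q)_n

  for A = q^(1/2-n), B = q^(5/2-2n)/a, C = q^(z-2n+2).  Let t_n(k) be the summand, u_n(k) the same product with A, B replaced
  by Aq, Bq and without the factor q^k, and rho_n the quotient of consecutive right-hand
  sides.  Then t_(n+1)(k+1) = rho_n t_n(k+1) + (1 - rho_n) (u_n(k+1) - u_n(k)), a rational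
  identity in q^k and q^n.  Summing over k, the u-terms telescope to u_n(n+1) - u_n(0) = -1,
  and the sum for n+1 becomes rho_n times the sum for n.
*)

lemma qpoch_0 [simp]: "qpoch u q 0 = 1"
  by (simp add: qpoch_def)

lemma qpoch_Suc: "qpoch u q (Suc k) = qpoch u q k * (1 - u * q ^ k)"
  by (simp add: qpoch_def)

lemma qpoch_Suc_shift: "qpoch u q (Suc k) = (1 - u) * qpoch (u * q) q k"
  unfolding qpoch_def prod.lessThan_Suc_shift by (simp add: mult.assoc)

lemma qpoch_eq_0_iff: "qpoch u q k = 0 \<longleftrightarrow> (\<exists>i<k. u * q ^ i = 1)"
  by (auto simp: qpoch_def)

lemma qpoch_inverse_power_eq_0:
  assumes "q \<noteq> 0" and "n < k"
  shows "qpoch (1 / q ^ n) q k = 0"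
  using assms by (auto simp: qpoch_eq_0_iff)

definition saalschuetz_term :: "complex \<Rightarrow> complex \<Rightarrow> complex \<Rightarrow> complex \<Rightarrow> nat \<Rightarrow> nat \<Rightarrow> complex" where
  "saalschuetz_term q A B C n k =
     qpoch (1 / q ^ n) q k * qpoch A q k * qpoch B q k
       / (qpoch q q k * qpoch C q k * qpoch (q * A * B / (C * q ^ n)) q k) * q ^ k"

definition saalschuetz_shifted_term :: "complex \<Rightarrow> complex \<Rightarrow> complex \<Rightarrow> complex \<Rightarrow> nat \<Rightarrow> nat \<Rightarrow> complex" where
  "saalschuetz_shifted_term q A B C n k =
     qpoch (1 / q ^ n) q k * qpoch (A * q) q k * qpoch (B * q) q k
       / (qpoch q q k * qpoch C q k * qpoch (q * A * B / (C * q ^ n)) q k)"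

definition saalschuetz_rhs :: "complex \<Rightarrow> complex \<Rightarrow> complex \<Rightarrow> complex \<Rightarrow> nat \<Rightarrow> complex" where
  "saalschuetz_rhs q A B C n =
     qpoch (C / A) q n * qpoch (C / B) q n / (qpoch C q n * qpoch (C / (A * B)) q n)"

definition saalschuetz_factor :: "complex \<Rightarrow> complex \<Rightarrow> complex \<Rightarrow> complex \<Rightarrow> nat \<Rightarrow> complex" where
  "saalschuetz_factor q A B C n =
     (1 - C/A * q^n) * (1 - C/B * q^n) / ((1 - C * q^n) * (1 - C/(A*B) * q^n))"

lemma saalschuetz_term_0 [simp]: "saalschuetz_term q A B C n 0 = 1"
  by (simp add: saalschuetz_term_def)

lemma saalschuetz_shifted_term_0 [simp]: "saalschuetz_shifted_term q A B C n 0 = 1"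
  by (simp add: saalschuetz_shifted_term_def)

text \<open>The following recurrences need no non-vanishing hypotheses: division is
  multiplication by \<open>inverse\<close>, which is multiplicative even at \<open>0\<close>.\<close>

lemma saalschuetz_rhs_Suc:
  "saalschuetz_rhs q A B C (Suc n) = saalschuetz_factor q A B C n * saalschuetz_rhs q A B C n"
  unfolding saalschuetz_rhs_def saalschuetz_factor_def qpoch_Suc
  by (simp add: divide_inverse inverse_mult_distrib mult_ac)

lemma saalschuetz_term_Suc:
  "saalschuetz_term q A B C n (Suc j) = saalschuetz_shifted_term q A B C n j
     * ((1 - q^j/q^n) * (1 - A) * (1 - B) * (q * q^j)
        / ((1 - q * q^j) * (1 - C * q^j) * (1 - q*A*B/(C*q^n) * q^j)))"
  unfolding saalschuetz_term_def saalschuetz_shifted_term_def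
    qpoch_Suc[of "1 / q^n"] qpoch_Suc[of q] qpoch_Suc[of C] qpoch_Suc[of "q*A*B/(C*q^n)"]
    qpoch_Suc_shift[of A] qpoch_Suc_shift[of B]
  by (simp add: divide_inverse inverse_mult_distrib mult_ac)

lemma saalschuetz_shifted_term_Suc:
  "saalschuetz_shifted_term q A B C n (Suc j) = saalschuetz_shifted_term q A B C n j
     * ((1 - q^j/q^n) * (1 - A*q*q^j) * (1 - B*q*q^j)
        / ((1 - q * q^j) * (1 - C * q^j) * (1 - q*A*B/(C*q^n) * q^j)))"
  unfolding saalschuetz_shifted_term_def qpoch_Suc
  by (simp add: divide_inverse inverse_mult_distrib mult_ac)

lemma saalschuetz_term_Suc_Suc:
  assumes "q \<noteq> 0"
  shows "saalschuetz_term q A B C (Suc n) (Suc j) = saalschuetz_shifted_term q A B C n j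
     * ((1 - 1/(q * q^n)) * (1 - A) * (1 - B) * (q * q^j)
        / ((1 - q * q^j) * (1 - C * q^j) * (1 - q*A*B/(C*(q * q^n)))))"
proof -
  have shifted: "1 / (q * q^n) * q = 1 / q^n" "q*A*B / (C * (q * q^n)) * q = q*A*B / (C * q^n)"
    using assms by (simp_all add: field_simps)
  show ?thesis
    unfolding saalschuetz_term_def saalschuetz_shifted_term_def power_Suc
      qpoch_Suc_shift[of "1 / (q * q^n)"] qpoch_Suc_shift[of "q*A*B / (C * (q * q^n))"] shifted
      qpoch_Suc_shift[of A] qpoch_Suc_shift[of B] qpoch_Suc[of q] qpoch_Suc[of C]
    by (simp add: divide_inverse inverse_mult_distrib mult_ac)
qed

lemma saalschuetz_factor_closed_forms:
  fixes A B C N :: complex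
  assumes "A \<noteq> 0" "B \<noteq> 0" "C * N \<noteq> 1" "C * N \<noteq> A * B"
  defines "\<rho> \<equiv> (1 - C/A * N) * (1 - C/B * N) / ((1 - C * N) * (1 - C/(A*B) * N))"
  shows "\<rho> = (A - C*N) * (B - C*N) / ((1 - C*N) * (A*B - C*N))"
    and "1 - \<rho> = C*N * (1 - A) * (1 - B) / ((1 - C*N) * (C*N - A*B))"
proof -
  have "1 - C/A*N = (A - C*N)/A" "1 - C/B*N = (B - C*N)/B" "1 - C/(A*B)*N = (A*B - C*N)/(A*B)"
    using assms by (simp_all add: field_simps)
  then show \<rho>: "\<rho> = (A - C*N) * (B - C*N) / ((1 - C*N) * (A*B - C*N))"
    using assms unfolding \<rho>_def by (simp add: divide_simps)
  have num: "(1 - C*N) * (A*B - C*N) - (A - C*N) * (B - C*N) = - (C*N * (1 - A) * (1 - B))"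
    by algebra
  have den: "(1 - C*N) * (A*B - C*N) = - ((1 - C*N) * (C*N - A*B))"
    by algebra
  have "(1 - C*N) * (A*B - C*N) \<noteq> 0"
    using assms by simp
  then have "1 - \<rho> = ((1 - C*N) * (A*B - C*N) - (A - C*N) * (B - C*N)) / ((1 - C*N) * (A*B - C*N))"
    unfolding \<rho> by (simp add: diff_divide_eq_iff)
  also have "\<dots> = - (C*N * (1 - A) * (1 - B)) / - ((1 - C*N) * (C*N - A*B))"
    by (subst num, subst den, rule refl)
  finally show "1 - \<rho> = C*N * (1 - A) * (1 - B) / ((1 - C*N) * (C*N - A*B))"
    by simp
qed

text \<open>For \<open>y = N\<close> the two terms with the factor \<open>N - y\<close> vanish, so the
  denominator \<open>F\<close> is allowed to be zero there.\<close>

lemma saalschuetz_cleared_identity: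
  fixes q A B C N y :: complex
  defines "\<Delta> \<equiv> (1 - q*y) * (1 - C*y)" and "F \<equiv> C*N - q*A*B*y"
  assumes "\<Delta> \<noteq> 0" "C * N \<noteq> 1" "C * N \<noteq> A * B" and "F \<noteq> 0 \<or> y = N"
  shows "(q*N - 1) * (1 - A) * (1 - B) * C * y / (\<Delta> * (C*N - A*B))
    = (A - C*N) * (B - C*N) / ((1 - C*N) * (A*B - C*N)) * ((N - y) * (1 - A) * (1 - B) * q * C * y / (\<Delta> * F))
      + C*N * (1 - A) * (1 - B) / ((1 - C*N) * (C*N - A*B)) * ((N - y) * (1 - A*q*y) * (1 - B*q*y) * C / (\<Delta> * F) - 1)"
    (is "?lhs = ?rhs")
  using \<open>F \<noteq> 0 \<or> y = N\<close>
proof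
  assume "F \<noteq> 0"
  have d3: "C*N - A*B \<noteq> 0" and d4: "1 - C*N \<noteq> 0"
    using assms by auto
  have combine: "r / (g * -e) * (b / (\<Delta> * F)) + s / (g * e) * (c / (\<Delta> * F) - 1)
      = (s * (c - \<Delta> * F) - r * b) / (g * e * \<Delta> * F)"
    if "g \<noteq> 0" "e \<noteq> 0" for r s b c g e :: complex
    using that \<open>F \<noteq> 0\<close> \<open>\<Delta> \<noteq> 0\<close> by (simp add: field_simps)
  have key: "C * N * (1 - A) * (1 - B) * ((N - y) * (1 - A*q*y) * (1 - B*q*y) * C - \<Delta> * F)
      - (A - C*N) * (B - C*N) * ((N - y) * (1 - A) * (1 - B) * q * C * y)
      = (1 - A) * (1 - B) * C * ((q*N - 1) * y * (1 - C*N) * F)"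
    unfolding \<Delta>_def F_def by algebra
  have "?rhs = (C * N * (1 - A) * (1 - B) * ((N - y) * (1 - A*q*y) * (1 - B*q*y) * C - \<Delta> * F)
      - (A - C*N) * (B - C*N) * ((N - y) * (1 - A) * (1 - B) * q * C * y)) / ((1 - C*N) * (C*N - A*B) * \<Delta> * F)"
    by (subst minus_diff_eq[of "C*N" "A*B", symmetric], rule combine) (use d3 d4 in simp_all)
  also have "\<dots> = (1 - A) * (1 - B) * C * ((q*N - 1) * y) * ((1 - C*N) * F)
      / (\<Delta> * (C*N - A*B) * ((1 - C*N) * F))"
    unfolding key by (simp add: ac_simps)
  also have "\<dots> = ?lhs"
    using \<open>F \<noteq> 0\<close> d4 by (subst nonzero_mult_divide_mult_cancel_right) (simp_all add: mult_ac)
  finally show ?thesis by (rule sym)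
next
  assume yN: "y = N"
  have sign: "(q*N - 1) / (1 - q*N) = -1"
    using \<open>\<Delta> \<noteq> 0\<close> yN by (simp add: \<Delta>_def divide_eq_eq)
  have "?rhs = (q*N - 1) / (1 - q*N) * (C*N * (1 - A) * (1 - B) / ((1 - C*N) * (C*N - A*B)))"
    using yN unfolding sign by simp
  also have "\<dots> = ?lhs"
    unfolding yN \<Delta>_def by (simp add: mult_ac)
  finally show ?thesis by (rule sym)
qed

lemma saalschuetz_rational_identity:
  fixes q A B C N y :: complex
  assumes nz: "q \<noteq> 0" "A \<noteq> 0" "B \<noteq> 0" "C \<noteq> 0" "N \<noteq> 0"
    and CN: "C * N \<noteq> 1" "C * N \<noteq> A * B"
    and den: "q * y \<noteq> 1" "C * y \<noteq> 1"
    and top: "q * A * B * y \<noteq> C * N \<or> y = N"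
  defines "\<rho> \<equiv> (1 - C/A * N) * (1 - C/B * N) / ((1 - C * N) * (1 - C/(A*B) * N))"
  shows "(1 - 1/(q*N)) * (1 - A) * (1 - B) * (q*y) / ((1 - q*y) * (1 - C*y) * (1 - q*A*B/(C*(q*N))))
    = \<rho> * ((1 - y/N) * (1 - A) * (1 - B) * (q*y) / ((1 - q*y) * (1 - C*y) * (1 - q*A*B/(C*N)*y)))
      + (1 - \<rho>) * ((1 - y/N) * (1 - A*q*y) * (1 - B*q*y) / ((1 - q*y) * (1 - C*y) * (1 - q*A*B/(C*N)*y)) - 1)"
proof -
  define \<Delta> F where "\<Delta> = (1 - q*y) * (1 - C*y)" and "F = C*N - q*A*B*y"
  have \<Delta>0: "\<Delta> \<noteq> 0"
    using den by (simp add: \<Delta>_def)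
  have fracs: "1 - q*A*B/(C*(q*N)) = (C*N - A*B)/(C*N)" "1 - q*A*B/(C*N)*y = F/(C*N)"
      "1 - 1/(q*N) = (q*N - 1)/(q*N)" "1 - y/N = (N - y)/N"
    using nz by (simp_all add: F_def field_simps)
  have \<alpha>: "(1 - 1/(q*N)) * (1 - A) * (1 - B) * (q*y) / (\<Delta> * (1 - q*A*B/(C*(q*N))))
      = (q*N - 1) * (1 - A) * (1 - B) * C * y / (\<Delta> * (C*N - A*B))"
    using nz CN \<Delta>0 unfolding fracs by (simp add: field_simps)
  have \<beta>: "(1 - y/N) * (1 - A) * (1 - B) * (q*y) / (\<Delta> * (1 - q*A*B/(C*N)*y))
      = (N - y) * (1 - A) * (1 - B) * q * C * y / (\<Delta> * F)"
    and \<gamma>: "(1 - y/N) * (1 - A*q*y) * (1 - B*q*y) / (\<Delta> * (1 - q*A*B/(C*N)*y))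
      = (N - y) * (1 - A*q*y) * (1 - B*q*y) * C / (\<Delta> * F)"
    using nz unfolding fracs by (simp_all add: divide_simps)
  have "F \<noteq> 0 \<or> y = N"
    using top by (auto simp: F_def)
  then have reduced: "(q*N - 1) * (1 - A) * (1 - B) * C * y / (\<Delta> * (C*N - A*B))
    = (A - C*N) * (B - C*N) / ((1 - C*N) * (A*B - C*N)) * ((N - y) * (1 - A) * (1 - B) * q * C * y / (\<Delta> * F))
      + C*N * (1 - A) * (1 - B) / ((1 - C*N) * (C*N - A*B)) * ((N - y) * (1 - A*q*y) * (1 - B*q*y) * C / (\<Delta> * F) - 1)"
    unfolding \<Delta>_def F_def using \<Delta>0 CN by (intro saalschuetz_cleared_identity) (simp_all add: \<Delta>_def)
  have \<Delta>_fold: "(1 - q*y) * (1 - C*y) * X = \<Delta> * X" for X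
    by (simp add: \<Delta>_def)
  show ?thesis
    unfolding \<Delta>_fold \<alpha> \<beta> \<gamma> \<rho>_def
    unfolding saalschuetz_factor_closed_forms(2)[OF nz(2,3) CN]
    unfolding saalschuetz_factor_closed_forms(1)[OF nz(2,3) CN]
    by (rule reduced)
qed

lemma saalschuetz_contiguous:
  fixes q A B C :: complex
  assumes nz: "q \<noteq> 0" "A \<noteq> 0" "B \<noteq> 0" "C \<noteq> 0" and "j \<le> n"
    and hq: "qpoch q q (Suc n) \<noteq> 0" and hC: "qpoch C q (Suc n) \<noteq> 0"
    and hD: "qpoch (q*A*B / (C * q ^ Suc n)) q (Suc n) \<noteq> 0"
    and hE: "qpoch (C / (A*B)) q (Suc n) \<noteq> 0"
  defines "\<rho> \<equiv> saalschuetz_factor q A B C n"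
  shows "saalschuetz_term q A B C (Suc n) (Suc j)
    = \<rho> * saalschuetz_term q A B C n (Suc j)
      + (1 - \<rho>) * (saalschuetz_shifted_term q A B C n (Suc j) - saalschuetz_shifted_term q A B C n j)"
proof -
  have "C * q^n \<noteq> 1"
    using hC by (auto simp: qpoch_eq_0_iff)
  moreover have "C * q^n \<noteq> A * B"
    using hE nz by (auto simp: qpoch_eq_0_iff field_simps)
  moreover have "q * q^j \<noteq> 1" "C * q^j \<noteq> 1"
    using hq hC \<open>j \<le> n\<close> by (auto simp: qpoch_eq_0_iff)
  moreover have "q * A * B * q^j \<noteq> C * q^n \<or> q^j = q^n"
  proof (cases "j = n")
    case False
    with \<open>j \<le> n\<close> have "Suc j < Suc n"
      by simp
    then have "q*A*B / (C * q ^ Suc n) * q ^ Suc j \<noteq> 1"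
      using hD unfolding qpoch_eq_0_iff by blast
    then show ?thesis
      using nz by (auto simp: field_simps)
  qed simp
  ultimately have identity: "(1 - 1/(q * q^n)) * (1 - A) * (1 - B) * (q * q^j)
        / ((1 - q * q^j) * (1 - C * q^j) * (1 - q*A*B/(C*(q * q^n))))
      = \<rho> * ((1 - q^j/q^n) * (1 - A) * (1 - B) * (q * q^j)
          / ((1 - q * q^j) * (1 - C * q^j) * (1 - q*A*B/(C*q^n) * q^j)))
        + (1 - \<rho>) * ((1 - q^j/q^n) * (1 - A*q*q^j) * (1 - B*q*q^j)
          / ((1 - q * q^j) * (1 - C * q^j) * (1 - q*A*B/(C*q^n) * q^j)) - 1)"
    unfolding \<rho>_def saalschuetz_factor_def using nz
    by (intro saalschuetz_rational_identity) simp_all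
  have "U * \<alpha> = \<rho> * (U * \<beta>) + (1 - \<rho>) * (U * \<gamma> - U)"
    if "\<alpha> = \<rho> * \<beta> + (1 - \<rho>) * (\<gamma> - 1)" for U \<alpha> \<beta> \<gamma> :: complex
    by (simp add: that algebra_simps)
  from this[OF identity] show ?thesis
    unfolding saalschuetz_term_Suc_Suc[OF nz(1)]
    unfolding saalschuetz_term_Suc saalschuetz_shifted_term_Suc .
qed

theorem q_pfaff_saalschuetz:
  fixes q A B C :: complex
  assumes nz: "q \<noteq> 0" "A \<noteq> 0" "B \<noteq> 0" "C \<noteq> 0"
    and "qpoch q q n \<noteq> 0" "qpoch C q n \<noteq> 0" "qpoch (q*A*B / (C * q ^ n)) q n \<noteq> 0"
      "qpoch (C / (A*B)) q n \<noteq> 0"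
  shows "(\<Sum>k\<le>n. saalschuetz_term q A B C n k) = saalschuetz_rhs q A B C n"
  using assms(5-)
proof (induction n)
  case 0
  then show ?case
    by (simp add: saalschuetz_term_def saalschuetz_rhs_def)
next
  case (Suc n)
  let ?T = "saalschuetz_term q A B C n" and ?U = "saalschuetz_shifted_term q A B C n"
  define \<rho> where "\<rho> = saalschuetz_factor q A B C n"
  have "q*A*B / (C * q ^ Suc n) * q = q*A*B / (C * q ^ n)"
    using nz by (simp add: field_simps)
  then have D_shift: "qpoch (q*A*B / (C * q ^ Suc n)) q (Suc n)
      = (1 - q*A*B / (C * q ^ Suc n)) * qpoch (q*A*B / (C * q ^ n)) q n"
    by (simp only: qpoch_Suc_shift)
  have IH: "(\<Sum>k\<le>n. ?T k) = saalschuetz_rhs q A B C n"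
  proof (rule Suc.IH)
    show "qpoch q q n \<noteq> 0" "qpoch C q n \<noteq> 0" "qpoch (C / (A*B)) q n \<noteq> 0"
      using Suc.prems(1,2,4) by (simp_all add: qpoch_Suc)
    show "qpoch (q*A*B / (C * q ^ n)) q n \<noteq> 0"
      using Suc.prems(3) unfolding D_shift by simp
  qed
  have "?T (Suc n) = 0" "?U (Suc n) = 0"
    using nz by (simp_all add: saalschuetz_term_def saalschuetz_shifted_term_def
      qpoch_inverse_power_eq_0)
  then have tail: "(\<Sum>j\<le>n. ?T (Suc j)) = saalschuetz_rhs q A B C n - 1"
    and telescope: "(\<Sum>j\<le>n. ?U (Suc j) - ?U j) = - 1"
    using IH sum.atMost_Suc_shift[of ?T "Suc n"] sum_lessThan_telescope[of ?U "Suc n"]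
    by (simp_all add: lessThan_Suc_atMost)
  have "(\<Sum>k\<le>Suc n. saalschuetz_term q A B C (Suc n) k)
      = 1 + (\<Sum>j\<le>n. \<rho> * ?T (Suc j) + (1 - \<rho>) * (?U (Suc j) - ?U j))"
    unfolding sum.atMost_Suc_shift
    using saalschuetz_contiguous[OF nz _ Suc.prems, folded \<rho>_def] by simp
  also have "\<dots> = 1 + \<rho> * (\<Sum>j\<le>n. ?T (Suc j)) + (1 - \<rho>) * (\<Sum>j\<le>n. ?U (Suc j) - ?U j)"
    by (simp add: sum.distrib sum_distrib_left)
  also have "\<dots> = \<rho> * saalschuetz_rhs q A B C n"
    unfolding tail telescope by (simp add: algebra_simps)
  finally show ?case
    by (simp add: saalschuetz_rhs_Suc \<rho>_def)
qed

theorem mainTheorem3: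
  fixes n :: nat and r w a :: complex
  assumes "r \<noteq> 0" and "w \<noteq> 0" and "a \<noteq> 0"
    and "qpoch (w * r ^ 4 / r ^ (4 * n)) (r ^ 2) n \<noteq> 0"
    and "qpoch (a * w * r ^ (2 * n) / r ^ 2) (r ^ 2) n \<noteq> 0"
    and "qpoch (r ^ 2) (r ^ 2) n \<noteq> 0"
    and "qpoch (r ^ 4 / (r ^ (4 * n) * w * a)) (r ^ 2) n \<noteq> 0"
  shows "qpoch (w * r ^ 3 / r ^ (2 * n)) (r ^ 2) n * qpoch (a * w / r) (r ^ 2) n
          / (qpoch (w * r ^ 4 / r ^ (4 * n)) (r ^ 2) n * qpoch (a * w * r ^ (2 * n) / r ^ 2) (r ^ 2) n)
       = (\<Sum>k=0..n.
            qpoch (1 / r ^ (2 * n)) (r ^ 2) k * qpoch (r / r ^ (2 * n)) (r ^ 2) k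
              * qpoch (r ^ 5 / (r ^ (4 * n) * a)) (r ^ 2) k
            / (qpoch (r ^ 2) (r ^ 2) k * qpoch (w * r ^ 4 / r ^ (4 * n)) (r ^ 2) k
              * qpoch (r ^ 4 / (r ^ (4 * n) * w * a)) (r ^ 2) k)
            * (r ^ 2) ^ k)"
proof -
  define q A B C where "q = r^2" and "A = r / r^(2*n)" and "B = r^5 / (r^(4*n) * a)"
    and "C = w * r^4 / r^(4*n)"
  have nz: "q \<noteq> 0" "A \<noteq> 0" "B \<noteq> 0" "C \<noteq> 0"
    using assms(1-3) by (simp_all add: q_def A_def B_def C_def)
  have qn: "q^n = r^(2*n)"
    by (simp add: q_def power_mult)
  have powers: "r^(2*n) = (r^n)^2" "r^(4*n) = (r^n)^4"
    by (simp_all add: power_mult mult.commute)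
  have D: "q*A*B / (C * q^n) = r^4 / (r^(4*n) * w * a)"
    and CA: "C / A = w * r^3 / r^(2*n)"
    and CB: "C / B = a * w / r"
    and CAB: "C / (A*B) = a * w * r^(2*n) / r^2"
    unfolding qn q_def A_def B_def C_def powers using assms(1-3)
    by (simp_all add: field_simps eval_nat_numeral)
  have "(\<Sum>k\<le>n. saalschuetz_term q A B C n k) = saalschuetz_rhs q A B C n"
  proof (rule q_pfaff_saalschuetz[OF nz])
    show "qpoch q q n \<noteq> 0" "qpoch C q n \<noteq> 0"
      using assms(4,6) by (simp_all add: q_def C_def)
    show "qpoch (q*A*B / (C * q^n)) q n \<noteq> 0" "qpoch (C / (A*B)) q n \<noteq> 0"
      unfolding D CAB using assms(5,7) by (simp_all add: q_def)
  qed
  then show ?thesis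
    unfolding saalschuetz_term_def saalschuetz_rhs_def atLeast0AtMost
    unfolding D CA CB CAB unfolding qn unfolding q_def A_def B_def C_def
    by (rule sym)
qed

end
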